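(* \[\inf_{\substack{F_S,F_B\in\Delta_{L^1}(\mathbb{R}_+)\\ \mathbb{E}[(S-B)_+]=0}}\ \sup_{p\in\mathbb{R}_+}\frac{\mathsf{W}(p;F_S,F_B)}{\mathsf{OPT\text{-}W}(F_S,F_B)}=\frac34 .\] In particular, whenever $\mathbb{E}[(S-B)_+]=0$ (the seller's value is almost surely at most the buyer's value), for every $\eta>0$ some fixed price achieves at least $(3/4-\eta)\,\mathsf{OPT\text{-}W}(F_S,F_B)$.
   Context: Asymmetric bilateral trade: seller's value $S\sim F_S$ and buyer's value $B\sim F_B$ independent, both distributions on $[0,\infty)$ with finite means (not both zero). Posting price $p$, trade iff $B>p\ge S$. $\mathsf{W}(p;F_S,F_B)=\mathbb{E}[S+(B-S)\mathbf 1_{B>p\ge S}]$, $\mathsf{OPT\text{-}W}(F_S,F_B)=\mathbb{E}[S+(B-S)\mathbf 1_{B>S}]=\mathbb{E}[\max\{B,S\}]$. $(x)_+=\max\{x,0\}$. *)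

theory Defs
  imports "HOL-Probability.Probability"
begin

definition nonneg_L1_dist :: "real measure \<Rightarrow> bool" where
  "nonneg_L1_dist M \<longleftrightarrow> sets M = sets borel \<and> prob_space M \<and>
     (AE x in M. 0 \<le> x) \<and> integrable M (\<lambda>x. x)"

text \<open>Welfare of posted price p: S and B independent, S ~ FS, B ~ FB; trade iff B > p >= S.\<close>
definition W :: "real \<Rightarrow> real measure \<Rightarrow> real measure \<Rightarrow> real" where
  "W p FS FB = (\<integral>sb. (case sb of (s, b) \<Rightarrow>
       s + (b - s) * indicator {(s', b'). b' > p \<and> p \<ge> s'} (s, b)) \<partial>(FS \<Otimes>\<^sub>M FB))"

definition OPT_W :: "real measure \<Rightarrow> real measure \<Rightarrow> real" where
  "OPT_W FS FB = (\<integral>sb. (case sb of (s, b) \<Rightarrow>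
       s + (b - s) * indicator {(s', b'). b' > s'} (s, b)) \<partial>(FS \<Otimes>\<^sub>M FB))"

definition gains_from_reverse :: "real measure \<Rightarrow> real measure \<Rightarrow> real" where
  "gains_from_reverse FS FB = (\<integral>sb. (case sb of (s, b) \<Rightarrow> max (s - b) 0) \<partial>(FS \<Otimes>\<^sub>M FB))"

definition admissible :: "(real measure \<times> real measure) set" where
  "admissible = {(FS, FB). nonneg_L1_dist FS \<and> nonneg_L1_dist FB \<and>
      \<not> ((\<integral>x. x \<partial>FS) = 0 \<and> (\<integral>x. x \<partial>FB) = 0) \<and>
      gains_from_reverse FS FB = 0}"

end

theory Submission imports Defs begin

text \<open>
  Since S and B are independent and S \<le> B almost surely, the essential supremum of S lies below
  the essential infimum of B, so OPT-W = E[B]. Let p + \<delta> be the first point of a \<delta>-grid above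
  the support of S; then B > p almost surely. With q = P(S > p), posting p + \<delta> loses at most
  p(1 - q) + \<delta> against E[B], and posting p loses at most q(E[B] - p). Since
  q(1 - q) p(E[B] - p) \<le> E[B]^2/16, one of the two losses is at most E[B]/4.
  Tightness: S uniform on {0, 1} and B equal to 1 + 1/\<beta> with probability \<beta>, else 1, give
  E[B] = 2 while every price yields welfare at most 3/2 + \<beta>/2.
\<close>

definition trade_welfare :: "real \<Rightarrow> real \<Rightarrow> real \<Rightarrow> real" where
  "trade_welfare p s b = (if s \<le> p \<and> p < b then b else s)"

lemma borel_measurable_trade_welfare[measurable]:
  assumes [measurable]: "f \<in> borel_measurable M" "g \<in> borel_measurable M"
  shows "(\<lambda>x. trade_welfare p (f x) (g x)) \<in> borel_measurable M"
  unfolding trade_welfare_def by measurable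

lemma quarter_loss_dichotomy:
  fixes p q E :: real
  assumes "0 \<le> p" "0 \<le> q" "q \<le> 1" "0 \<le> E"
  shows "p * (1 - q) \<le> E / 4 \<or> q * (E - p) \<le> E / 4"
proof (rule ccontr)
  assume "\<not> ?thesis"
  then have x: "E / 4 < p * (1 - q)" and y: "E / 4 < q * (E - p)" by auto
  have "0 < q * (E - p)" using y assms by linarith
  then have "0 < E - p" using assms by (simp add: zero_less_mult_iff)
  have "(E/4) * (E/4) < (p * (1 - q)) * (q * (E - p))"
    using x y assms by (intro mult_strict_mono) auto
  also have "\<dots> = (q * (1 - q)) * (p * (E - p))" by (simp add: algebra_simps)
  also have "\<dots> \<le> (1/4) * (E/2 * (E/2))"
  proof (rule mult_mono)
    show "q * (1 - q) \<le> 1/4" using zero_le_square[of "q - 1/2"] by (simp add: algebra_simps)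
    show "p * (E - p) \<le> E/2 * (E/2)" using zero_le_square[of "p - E/2"] by (simp add: algebra_simps)
  qed (use \<open>0 < E - p\<close> assms in auto)
  finally show False by simp
qed

lemma (in pair_prob_space) distr_pair_snd: "distr (M1 \<Otimes>\<^sub>M M2) M2 snd = M2"
proof -
  have "distr (M1 \<Otimes>\<^sub>M M2) M2 snd =
      distr (distr (M2 \<Otimes>\<^sub>M M1) (M1 \<Otimes>\<^sub>M M2) (\<lambda>(x, y). (y, x))) M2 snd"
    by (subst distr_pair_swap) simp
  also have "\<dots> = distr (M2 \<Otimes>\<^sub>M M1) M2 fst"
    by (subst distr_distr) (auto intro!: distr_cong simp: space_pair_measure)
  finally show ?thesis by (simp add: M1.distr_pair_fst)
qed

context pair_prob_space
begin

lemma integrable_fst_comp: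
  fixes f :: "_ \<Rightarrow> real"
  assumes "integrable M1 f"
  shows "integrable (M1 \<Otimes>\<^sub>M M2) (\<lambda>z. f (fst z))"
  using assms integrable_distr_eq[of fst "M1 \<Otimes>\<^sub>M M2" M1 f] by (simp add: M2.distr_pair_fst)

lemma integrable_snd_comp:
  fixes f :: "_ \<Rightarrow> real"
  assumes "integrable M2 f"
  shows "integrable (M1 \<Otimes>\<^sub>M M2) (\<lambda>z. f (snd z))"
  using assms integrable_distr_eq[of snd "M1 \<Otimes>\<^sub>M M2" M2 f] by (simp add: distr_pair_snd)

lemma integral_fst_comp:
  fixes f :: "_ \<Rightarrow> real"
  assumes "f \<in> borel_measurable M1"
  shows "(\<integral>z. f (fst z) \<partial>(M1 \<Otimes>\<^sub>M M2)) = integral\<^sup>L M1 f"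
  using integral_distr[of fst "M1 \<Otimes>\<^sub>M M2" M1 f] assms by (simp add: M2.distr_pair_fst)

lemma integral_snd_comp:
  fixes f :: "_ \<Rightarrow> real"
  assumes "f \<in> borel_measurable M2"
  shows "(\<integral>z. f (snd z) \<partial>(M1 \<Otimes>\<^sub>M M2)) = integral\<^sup>L M2 f"
  using integral_distr[of snd "M1 \<Otimes>\<^sub>M M2" M2 f] assms by (simp add: distr_pair_snd)

lemma AE_fst_comp:
  assumes "AE x in M1. P x" "{x \<in> space M1. P x} \<in> sets M1"
  shows "AE z in M1 \<Otimes>\<^sub>M M2. P (fst z)"
proof -
  have marginal: "distr (M1 \<Otimes>\<^sub>M M2) M1 fst = M1" by (rule M2.distr_pair_fst)
  have "AE x in distr (M1 \<Otimes>\<^sub>M M2) M1 fst. P x" unfolding marginal by (rule assms(1))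
  then show ?thesis using assms(2) by (subst (asm) AE_distr_iff) auto
qed

lemma AE_snd_comp:
  assumes "AE x in M2. P x" "{x \<in> space M2. P x} \<in> sets M2"
  shows "AE z in M1 \<Otimes>\<^sub>M M2. P (snd z)"
proof -
  have marginal: "distr (M1 \<Otimes>\<^sub>M M2) M2 snd = M2" by (rule distr_pair_snd)
  have "AE x in distr (M1 \<Otimes>\<^sub>M M2) M2 snd. P x" unfolding marginal by (rule assms(1))
  then show ?thesis using assms(2) by (subst (asm) AE_distr_iff) auto
qed

end

locale trade_instance =
  fixes FS FB :: "real measure"
  assumes seller_dist: "nonneg_L1_dist FS" and buyer_dist: "nonneg_L1_dist FB"
begin

lemma sets_FS[measurable_cong]: "sets FS = sets borel"
  using seller_dist by (simp add: nonneg_L1_dist_def)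

lemma sets_FB[measurable_cong]: "sets FB = sets borel"
  using buyer_dist by (simp add: nonneg_L1_dist_def)

sublocale pair_prob_space FS FB
  using seller_dist buyer_dist
  by (simp add: nonneg_L1_dist_def pair_prob_space_def pair_sigma_finite_def prob_space_imp_sigma_finite)

abbreviation seller_mean :: real where "seller_mean \<equiv> \<integral>x. x \<partial>FS"
abbreviation buyer_mean :: real where "buyer_mean \<equiv> \<integral>x. x \<partial>FB"

lemma integrable_FS: "integrable FS (\<lambda>x. x)"
  using seller_dist by (simp add: nonneg_L1_dist_def)

lemma integrable_FB: "integrable FB (\<lambda>x. x)"
  using buyer_dist by (simp add: nonneg_L1_dist_def)

lemma AE_FS_nonneg: "AE x in FS. 0 \<le> x"
  using seller_dist by (simp add: nonneg_L1_dist_def)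

lemma AE_FB_nonneg: "AE x in FB. 0 \<le> x"
  using buyer_dist by (simp add: nonneg_L1_dist_def)

lemma integrable_linear_growth:
  assumes "g \<in> borel_measurable (FS \<Otimes>\<^sub>M FB)"
    and "\<And>s b. \<bar>g (s, b)\<bar> \<le> C * (\<bar>s\<bar> + \<bar>b\<bar> + 1)"
  shows "integrable (FS \<Otimes>\<^sub>M FB) g"
proof (rule Bochner_Integration.integrable_bound[of _ "\<lambda>z. C * (\<bar>fst z\<bar> + \<bar>snd z\<bar> + 1)"])
  show "integrable (FS \<Otimes>\<^sub>M FB) (\<lambda>z. C * (\<bar>fst z\<bar> + \<bar>snd z\<bar> + 1))"
    using integrable_FS integrable_FB
    by (intro integrable_mult_right Bochner_Integration.integrable_add
        integrable_fst_comp integrable_snd_comp integrable_abs) auto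
  show "AE z in FS \<Otimes>\<^sub>M FB. norm (g z) \<le> norm (C * (\<bar>fst z\<bar> + \<bar>snd z\<bar> + 1))"
    using assms(2) by (intro AE_I2) (metis abs_ge_self order_trans prod.collapse real_norm_def)
qed fact

lemma integrable_trade_welfare: "integrable (FS \<Otimes>\<^sub>M FB) (\<lambda>z. trade_welfare p (fst z) (snd z))"
  by (rule integrable_linear_growth[where C=1]) (auto simp: trade_welfare_def)

lemma integral_snd_eq_buyer_mean: "(\<integral>z. snd z \<partial>(FS \<Otimes>\<^sub>M FB)) = buyer_mean"
  using integral_snd_comp[of "\<lambda>x. x"] by simp

lemma W_eq_integral_trade_welfare:
  "W p FS FB = (\<integral>z. trade_welfare p (fst z) (snd z) \<partial>(FS \<Otimes>\<^sub>M FB))"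
  unfolding W_def trade_welfare_def
  by (rule Bochner_Integration.integral_cong) (auto split: prod.splits simp: indicator_def)

lemma W_eq_iterated_integral:
  "W p FS FB = (\<integral>s. (\<integral>b. trade_welfare p s b \<partial>FB) \<partial>FS)"
  using integral_fst'[OF integrable_trade_welfare] by (simp add: W_eq_integral_trade_welfare)

lemma OPT_W_eq_integral_max: "OPT_W FS FB = (\<integral>z. max (fst z) (snd z) \<partial>(FS \<Otimes>\<^sub>M FB))"
  unfolding OPT_W_def
  by (rule Bochner_Integration.integral_cong) (auto split: prod.splits simp: indicator_def max_def)

lemma gains_from_reverse_eq_0_iff:
  "gains_from_reverse FS FB = 0 \<longleftrightarrow> (AE z in FS \<Otimes>\<^sub>M FB. fst z \<le> snd z)"
proof -
  have "integrable (FS \<Otimes>\<^sub>M FB) (\<lambda>z. max (fst z - snd z) 0)"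
    by (rule integrable_linear_growth[where C=1]) auto
  moreover have "gains_from_reverse FS FB = (\<integral>z. max (fst z - snd z) 0 \<partial>(FS \<Otimes>\<^sub>M FB))"
    unfolding gains_from_reverse_def by (rule Bochner_Integration.integral_cong) auto
  ultimately have "gains_from_reverse FS FB = 0 \<longleftrightarrow>
      (AE z in FS \<Otimes>\<^sub>M FB. max (fst z - snd z) 0 = (0::real))"
    by (simp add: integral_nonneg_eq_0_iff_AE)
  moreover have "max (x - y) 0 = 0 \<longleftrightarrow> x \<le> y" for x y :: real
    by (simp add: max_def)
  ultimately show ?thesis by simp
qed

end

locale no_reverse_gains = trade_instance +
  assumes no_gains_from_reverse: "gains_from_reverse FS FB = 0"
begin

lemma AE_seller_le_buyer: "AE z in FS \<Otimes>\<^sub>M FB. fst z \<le> snd z"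
  using no_gains_from_reverse gains_from_reverse_eq_0_iff by simp

lemma OPT_W_eq_buyer_mean: "OPT_W FS FB = buyer_mean"
proof -
  have "OPT_W FS FB = (\<integral>z. snd z \<partial>(FS \<Otimes>\<^sub>M FB))"
    unfolding OPT_W_eq_integral_max
    by (rule integral_cong_AE) (use AE_seller_le_buyer in \<open>auto elim!: eventually_mono\<close>)
  then show ?thesis by (simp add: integral_snd_eq_buyer_mean)
qed

lemma W_le_buyer_mean: "W p FS FB \<le> buyer_mean"
proof -
  have "W p FS FB \<le> (\<integral>z. snd z \<partial>(FS \<Otimes>\<^sub>M FB))"
    unfolding W_eq_integral_trade_welfare
    using integrable_trade_welfare integrable_snd_comp[OF integrable_FB] AE_seller_le_buyer
    by (intro integral_mono_AE) (auto elim!: eventually_mono simp: trade_welfare_def)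
  then show ?thesis by (simp add: integral_snd_eq_buyer_mean)
qed

lemma seller_mean_le_buyer_mean: "seller_mean \<le> buyer_mean"
proof -
  have "(\<integral>z. fst z \<partial>(FS \<Otimes>\<^sub>M FB)) \<le> (\<integral>z. snd z \<partial>(FS \<Otimes>\<^sub>M FB))"
    using integrable_fst_comp[OF integrable_FS] integrable_snd_comp[OF integrable_FB] AE_seller_le_buyer
    by (intro integral_mono_AE) auto
  then show ?thesis using integral_fst_comp[of "\<lambda>x. x"] integral_snd_comp[of "\<lambda>x. x"] by simp
qed

lemma seller_below_or_buyer_above: "(AE s in FS. s \<le> t) \<or> (AE b in FB. t < b)"
proof (rule disjCI)
  assume buyer: "\<not> (AE b in FB. t < b)"
  have "s \<le> t" if "AE b in FB. s \<le> b" for s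
  proof (rule ccontr)
    assume "\<not> s \<le> t"
    with that have "AE b in FB. t < b" by (auto elim: eventually_mono)
    with buyer show False by simp
  qed
  moreover have "AE s in FS. AE b in FB. s \<le> b"
    using AE_pair[OF AE_seller_le_buyer] by simp
  ultimately show "AE s in FS. s \<le> t" by (auto elim: eventually_mono)
qed

lemma seller_bounded: "\<exists>t. AE s in FS. s \<le> t"
proof (rule ccontr)
  assume "\<not> ?thesis"
  then have "AE b in FB. buyer_mean + 1 < b" using seller_below_or_buyer_above by blast
  then have "(\<integral>b. buyer_mean + 1 \<partial>FB) \<le> buyer_mean"
    by (intro integral_mono_AE integrable_FB) (auto elim: eventually_mono)
  then show False by (simp add: M2.prob_space)
qed

text \<open>The smallest multiple of \<open>\<delta>\<close> bounding the seller's value separates the two values.\<close>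
lemma separating_price:
  assumes "0 < \<delta>"
  shows "(AE s in FS. s \<le> 0) \<or> (\<exists>p\<ge>0. (AE s in FS. s \<le> p + \<delta>) \<and> (AE b in FB. p < b))"
proof -
  define K where "K k \<longleftrightarrow> (AE s in FS. s \<le> real k * \<delta>)" for k :: nat
  obtain t where t: "AE s in FS. s \<le> t" using seller_bounded by blast
  have "t / \<delta> \<le> real (nat \<lceil>t / \<delta>\<rceil>)" by linarith
  then have "t \<le> real (nat \<lceil>t / \<delta>\<rceil>) * \<delta>" using assms by (simp add: divide_le_eq)
  with t have "K (nat \<lceil>t / \<delta>\<rceil>)" unfolding K_def by (auto elim: eventually_mono)
  then have K_Least: "K (LEAST k. K k)" by (rule LeastI)
  show ?thesis
  proof (cases "LEAST k. K k")
    case 0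
    then show ?thesis using K_Least unfolding K_def by simp
  next
    case (Suc j)
    then have "\<not> K j" using not_less_Least[of j K] by auto
    then have "AE b in FB. real j * \<delta> < b"
      using seller_below_or_buyer_above unfolding K_def by blast
    moreover have "AE s in FS. s \<le> real j * \<delta> + \<delta>"
      using K_Least Suc unfolding K_def by (simp add: algebra_simps)
    ultimately show ?thesis using assms by (intro disjI2 exI[of _ "real j * \<delta>"]) auto
  qed
qed

lemma W_ge_if_seller_below:
  assumes "0 \<le> p" "p \<le> c" and seller: "AE s in FS. s \<le> c"
  shows "buyer_mean - c + p * measure FS {p<..} \<le> W c FS FB"
proof -
  \<comment> \<open>At price c every seller is willing; a lost trade (b \<le> c) still leaves s,
    which exceeds p on {s > p}.\<close>
  let ?g = "\<lambda>z. snd z - c + p * indicator {p<..} (fst z)"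
  have ind: "integrable (FS \<Otimes>\<^sub>M FB) (\<lambda>z. indicator {p<..} (fst z) :: real)"
    by (rule integrable_linear_growth[where C=1]) (auto simp: indicator_def)
  have "integral\<^sup>L (FS \<Otimes>\<^sub>M FB) ?g = buyer_mean - c + p * measure FS {p<..}"
    using integrable_snd_comp[OF integrable_FB] ind
    by (simp add: integral_snd_eq_buyer_mean integral_fst_comp P.prob_space)
  moreover have "integral\<^sup>L (FS \<Otimes>\<^sub>M FB) ?g \<le> W c FS FB"
    unfolding W_eq_integral_trade_welfare
  proof (rule integral_mono_AE)
    show "integrable (FS \<Otimes>\<^sub>M FB) ?g"
      using integrable_snd_comp[OF integrable_FB] ind by simp
    have "AE z in FS \<Otimes>\<^sub>M FB. 0 \<le> fst z \<and> fst z \<le> c"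
      using AE_FS_nonneg seller by (intro AE_fst_comp) auto
    then show "AE z in FS \<Otimes>\<^sub>M FB. ?g z \<le> trade_welfare c (fst z) (snd z)"
      using AE_seller_le_buyer
      by eventually_elim (use assms in \<open>auto simp: trade_welfare_def indicator_def\<close>)
  qed (rule integrable_trade_welfare)
  ultimately show ?thesis by simp
qed

lemma W_ge_if_buyer_above:
  assumes "0 \<le> p" and buyer: "AE b in FB. p < b"
  shows "buyer_mean - measure FS {p<..} * (buyer_mean - p) \<le> W p FS FB"
proof -
  \<comment> \<open>Every buyer is willing at price p; a seller above p keeps s > p instead of b.\<close>
  let ?g = "\<lambda>z. snd z - (snd z - p) * indicator {p<..} (fst z)"
  have int_g: "integrable (FS \<Otimes>\<^sub>M FB) ?g"
    by (rule integrable_linear_growth[where C="2 + 2 * \<bar>p\<bar>"])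
      (auto simp: indicator_def algebra_simps)
  have inner: "(\<integral>b. ?g (s, b) \<partial>FB) = buyer_mean - (buyer_mean - p) * indicator {p<..} s" for s
  proof -
    have "(\<integral>b. ?g (s, b) \<partial>FB) =
        (\<integral>b. b * (1 - indicator {p<..} s) + p * indicator {p<..} s \<partial>FB)"
      by (rule Bochner_Integration.integral_cong) (simp_all add: algebra_simps)
    then show ?thesis using integrable_FB by (simp add: M2.prob_space algebra_simps)
  qed
  have "integral\<^sup>L (FS \<Otimes>\<^sub>M FB) ?g = (\<integral>s. buyer_mean - (buyer_mean - p) * indicator {p<..} s \<partial>FS)"
    using integral_fst'[OF int_g] inner by simp
  also have "\<dots> = buyer_mean - measure FS {p<..} * (buyer_mean - p)"
    by (simp add: M1.prob_space M1.emeasure_eq_measure)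
  finally have "integral\<^sup>L (FS \<Otimes>\<^sub>M FB) ?g = buyer_mean - measure FS {p<..} * (buyer_mean - p)" .
  moreover have "integral\<^sup>L (FS \<Otimes>\<^sub>M FB) ?g \<le> W p FS FB"
    unfolding W_eq_integral_trade_welfare
  proof (rule integral_mono_AE[OF int_g integrable_trade_welfare])
    have "AE z in FS \<Otimes>\<^sub>M FB. p < snd z"
      using buyer by (intro AE_snd_comp) auto
    then show "AE z in FS \<Otimes>\<^sub>M FB. ?g z \<le> trade_welfare p (fst z) (snd z)"
      using AE_seller_le_buyer
      by eventually_elim (use assms in \<open>auto simp: trade_welfare_def indicator_def\<close>)
  qed
  ultimately show ?thesis by simp
qed

lemma exists_price_W_ge:
  assumes "0 < \<delta>"
  shows "\<exists>p\<ge>0. 3/4 * buyer_mean - \<delta> \<le> W p FS FB"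
  using separating_price[OF assms]
proof
  assume "AE s in FS. s \<le> 0"
  then have "buyer_mean \<le> W 0 FS FB" using W_ge_if_seller_below[of 0 0] by simp
  moreover have "0 \<le> buyer_mean" using AE_FB_nonneg by (rule integral_nonneg_AE)
  ultimately show ?thesis using assms by (intro exI[of _ 0]) auto
next
  assume "\<exists>p\<ge>0. (AE s in FS. s \<le> p + \<delta>) \<and> (AE b in FB. p < b)"
  then obtain p where p: "0 \<le> p" and seller: "AE s in FS. s \<le> p + \<delta>"
    and buyer: "AE b in FB. p < b" by blast
  define q where "q = measure FS {p<..}"
  have high: "buyer_mean - (p + \<delta>) + p * q \<le> W (p + \<delta>) FS FB"
    using W_ge_if_seller_below[OF p _ seller] assms unfolding q_def by simp
  have low: "buyer_mean - q * (buyer_mean - p) \<le> W p FS FB"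
    using W_ge_if_buyer_above[OF p buyer] unfolding q_def .
  have "0 \<le> q" "q \<le> 1" unfolding q_def by simp_all
  moreover have "0 \<le> buyer_mean" using AE_FB_nonneg by (rule integral_nonneg_AE)
  ultimately consider "p * (1 - q) \<le> buyer_mean / 4" | "q * (buyer_mean - p) \<le> buyer_mean / 4"
    using quarter_loss_dichotomy[OF p] by blast
  then show ?thesis
  proof cases
    case 1
    with high p assms show ?thesis by (intro exI[of _ "p + \<delta>"]) (auto simp: algebra_simps)
  next
    case 2
    with low p assms show ?thesis by (intro exI[of _ p]) auto
  qed
qed

end

lemma three_quarters_le_SUP_ratio:
  assumes "(FS, FB) \<in> admissible"
  shows "3/4 \<le> (SUP p \<in> {0::real..}. W p FS FB / OPT_W FS FB)"
proof -
  interpret no_reverse_gains FS FB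
    using assms by unfold_locales (auto simp: admissible_def)
  have "0 \<le> seller_mean" using AE_FS_nonneg by (rule integral_nonneg_AE)
  then have pos: "0 < buyer_mean"
    using seller_mean_le_buyer_mean assms by (auto simp: admissible_def)
  have bdd: "bdd_above ((\<lambda>p. W p FS FB / OPT_W FS FB) ` {0..})"
    using W_le_buyer_mean pos by (intro bdd_aboveI[of _ 1]) (auto simp: OPT_W_eq_buyer_mean)
  have "3/4 \<le> (SUP p \<in> {0::real..}. W p FS FB / OPT_W FS FB) + e" if "0 < e" for e
  proof -
    obtain p where "0 \<le> p" and p: "3/4 * buyer_mean - e * buyer_mean \<le> W p FS FB"
      using exists_price_W_ge[of "e * buyer_mean"] pos \<open>0 < e\<close> by auto
    have "3/4 - e \<le> W p FS FB / OPT_W FS FB"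
      using p pos by (simp add: OPT_W_eq_buyer_mean le_divide_eq algebra_simps)
    also have "\<dots> \<le> (SUP p \<in> {0::real..}. W p FS FB / OPT_W FS FB)"
      using bdd \<open>0 \<le> p\<close> by (intro cSUP_upper) auto
    finally show ?thesis by simp
  qed
  then show ?thesis by (rule field_le_epsilon)
qed

definition two_point :: "real \<Rightarrow> real \<Rightarrow> real \<Rightarrow> real measure" where
  "two_point a x y = distr (measure_pmf (bernoulli_pmf a)) borel (\<lambda>c. if c then x else y)"

lemma sets_two_point[measurable_cong]: "sets (two_point a x y) = sets borel"
  by (simp add: two_point_def)

lemma integral_two_point:
  assumes "0 \<le> a" "a \<le> 1" "g \<in> borel_measurable borel"
  shows "(\<integral>z. g z \<partial>two_point a x y) = a * g x + (1 - a) * g y"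
  using assms unfolding two_point_def by (subst integral_distr) auto

lemma AE_two_point:
  assumes "P x" "P y" "{z. P z} \<in> sets borel"
  shows "AE z in two_point a x y. P z"
  unfolding two_point_def using assms by (subst AE_distr_iff) auto

lemma nonneg_L1_dist_two_point:
  assumes "0 \<le> a" "a \<le> 1" "0 \<le> x" "0 \<le> y"
  shows "nonneg_L1_dist (two_point a x y)"
  unfolding nonneg_L1_dist_def
proof (intro conjI)
  show "prob_space (two_point a x y)"
    unfolding two_point_def by (rule prob_space.prob_space_distr) (auto simp: prob_space_measure_pmf)
  show "AE z in two_point a x y. 0 \<le> z"
    using assms by (intro AE_two_point) auto
  show "integrable (two_point a x y) (\<lambda>z. z)"
    unfolding two_point_def by (subst integrable_distr_eq) (auto intro: integrable_measure_pmf_finite)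
qed (simp add: sets_two_point)

context
  fixes \<beta> :: real
  assumes \<beta>: "0 < \<beta>" "\<beta> < 1"
begin

interpretation tight: trade_instance "two_point (1/2) 1 0" "two_point \<beta> (1 + 1/\<beta>) 1"
  using \<beta> by unfold_locales (auto intro!: nonneg_L1_dist_two_point)

lemma tight_no_gains_from_reverse:
  "gains_from_reverse (two_point (1/2) 1 0) (two_point \<beta> (1 + 1/\<beta>) 1) = 0"
proof -
  have "AE z in two_point (1/2) 1 0 \<Otimes>\<^sub>M two_point \<beta> (1 + 1/\<beta>) 1. fst z \<le> 1"
    by (intro tight.AE_fst_comp AE_two_point) auto
  moreover have "AE z in two_point (1/2) 1 0 \<Otimes>\<^sub>M two_point \<beta> (1 + 1/\<beta>) 1. 1 \<le> snd z"
    using \<beta> by (intro tight.AE_snd_comp AE_two_point) auto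
  ultimately show ?thesis
    unfolding tight.gains_from_reverse_eq_0_iff by eventually_elim simp
qed

lemma tight_instance_admissible: "(two_point (1/2) 1 0, two_point \<beta> (1 + 1/\<beta>) 1) \<in> admissible"
  using \<beta> tight_no_gains_from_reverse
  by (auto simp: admissible_def integral_two_point intro!: nonneg_L1_dist_two_point)

lemma OPT_W_tight_instance: "OPT_W (two_point (1/2) 1 0) (two_point \<beta> (1 + 1/\<beta>) 1) = 2"
proof -
  interpret no_reverse_gains "two_point (1/2) 1 0" "two_point \<beta> (1 + 1/\<beta>) 1"
    by unfold_locales (rule tight_no_gains_from_reverse)
  show ?thesis using \<beta> by (simp add: OPT_W_eq_buyer_mean integral_two_point distrib_left)
qed

lemma W_tight_instance_le: "W p (two_point (1/2) 1 0) (two_point \<beta> (1 + 1/\<beta>) 1) \<le> 3/2 + \<beta>/2"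
proof -
  define X where "X = 1 + 1/\<beta>"
  have "W p (two_point (1/2) 1 0) (two_point \<beta> X 1) =
      (\<integral>s. \<beta> * trade_welfare p s X + (1 - \<beta>) * trade_welfare p s 1 \<partial>two_point (1/2) 1 0)"
    unfolding X_def tight.W_eq_iterated_integral using \<beta>
    by (intro Bochner_Integration.integral_cong) (simp_all add: integral_two_point)
  also have "\<dots> = (\<beta> * trade_welfare p 1 X + (1 - \<beta>) * trade_welfare p 1 1) / 2
      + (\<beta> * trade_welfare p 0 X + (1 - \<beta>) * trade_welfare p 0 1) / 2"
    by (simp add: integral_two_point)
  also have "\<dots> \<le> 3/2 + \<beta>/2"
  proof -
    have "\<beta> * X = \<beta> + 1" "1 < X" using \<beta> by (simp_all add: X_def field_simps)
    then show ?thesis using \<beta> by (auto simp: trade_welfare_def algebra_simps add_divide_distrib)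
  qed
  finally show ?thesis unfolding X_def .
qed

lemma SUP_ratio_tight_instance_le:
  "(SUP p \<in> {0::real..}. W p (two_point (1/2) 1 0) (two_point \<beta> (1 + 1/\<beta>) 1)
      / OPT_W (two_point (1/2) 1 0) (two_point \<beta> (1 + 1/\<beta>) 1)) \<le> 3/4 + \<beta>/4"
  using W_tight_instance_le by (intro cSUP_least) (auto simp: OPT_W_tight_instance)

end

theorem proposition9:
  shows "(INF FF \<in> admissible.
            SUP p \<in> {0::real..}. W p (fst FF) (snd FF) / OPT_W (fst FF) (snd FF)) = 3 / 4"
proof (rule antisym)
  let ?ratio = "\<lambda>FF. SUP p \<in> {0::real..}. W p (fst FF) (snd FF) / OPT_W (fst FF) (snd FF)"
  have lower: "3/4 \<le> ?ratio FF" if "FF \<in> admissible" for FF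
    using three_quarters_le_SUP_ratio[of "fst FF" "snd FF"] that by simp
  have "admissible \<noteq> {}" using tight_instance_admissible[of "1/2"] by auto
  then show "3/4 \<le> (INF FF \<in> admissible. ?ratio FF)" using lower by (rule cINF_greatest)
  have "(INF FF \<in> admissible. ?ratio FF) \<le> 3/4 + e" if "0 < e" for e
  proof -
    define \<beta> where "\<beta> = min (1/2) e"
    have \<beta>: "0 < \<beta>" "\<beta> < 1" "\<beta> \<le> e" using \<open>0 < e\<close> by (auto simp: \<beta>_def)
    have "(INF FF \<in> admissible. ?ratio FF) \<le> ?ratio (two_point (1/2) 1 0, two_point \<beta> (1 + 1/\<beta>) 1)"
      using lower tight_instance_admissible[OF \<beta>(1,2)] by (intro cINF_lower bdd_belowI[of _ "3/4"]) auto
    also have "\<dots> \<le> 3/4 + \<beta>/4" using SUP_ratio_tight_instance_le[OF \<beta>(1,2)] by simp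
    also have "\<dots> \<le> 3/4 + e" using \<beta> by simp
    finally show ?thesis .
  qed
  then show "(INF FF \<in> admissible. ?ratio FF) \<le> 3/4" by (rule field_le_epsilon)
qed

end
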